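(* For every state $x$ and every round $k\ge 0$, \[ \mathbb{E}\big[\Psi_0(X^k)-\Psi_0(X^{k+1}) \,\big|\, X^k=x\big] \;\ge\; \sum_{\{i,j\}\in E} \frac{\left(1-\frac{2}{\alpha}\right)(\ell_i(x)-\ell_j(x))^2}{\alpha\, d_{ij}\left(\frac{1}{s_i}+\frac{1}{s_j}\right)} \;-\; \frac{n}{\alpha}. \]
   Context: $G=(V,E)$ is an undirected graph on $n$ vertices (processors); $\deg(i)$ is the degree and $d_{ij}=\max\{\deg(i),\deg(j)\}$. Processor $i$ has speed $s_i>0$, scaled so the smallest speed is $1$; $s_{\max}=\max_i s_i$, $\mathcal{S}=\sum_i s_i$. There are $m$ unit tasks; in state $x$, $w_i(x)$ is the number of tasks on $i$ and $\ell_i(x)=w_i(x)/s_i$. $\Psi_0(x)=\sum_i (w_i(x)-m s_i/\mathcal{S})^2/s_i$. Protocol with $\alpha=4s_{\max}$: in each round every task, independently, with $i$ its current processor, chooses a uniformly random neighbor $j$; if $\ell_i-\ell_j>1/s_j$ it moves to $j$ with probability $\frac{\deg(i)}{d_{ij}}\cdot\frac{\ell_i-\ell_j}{\alpha(1/s_i+1/s_j)w_i}$, otherwise stays. $X^k$ denotes the state after $k$ rounds. The sum is over undirected edges, each counted once. *)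

theory Defs
  imports "HOL-Probability.Probability"
begin

text \<open>Graph: vertex set V (finite), symmetric irreflexive edge relation E on V.
  A state is an assignment of the m unit tasks (indexed 0..<m) to processors.\<close>

definition nbrs :: "'v set \<Rightarrow> ('v \<Rightarrow> 'v \<Rightarrow> bool) \<Rightarrow> 'v \<Rightarrow> 'v set" where
  "nbrs V E i = {j \<in> V. E i j}"

definition deg :: "'v set \<Rightarrow> ('v \<Rightarrow> 'v \<Rightarrow> bool) \<Rightarrow> 'v \<Rightarrow> nat" where
  "deg V E i = card (nbrs V E i)"

definition dmax :: "'v set \<Rightarrow> ('v \<Rightarrow> 'v \<Rightarrow> bool) \<Rightarrow> 'v \<Rightarrow> 'v \<Rightarrow> nat" where
  "dmax V E i j = max (deg V E i) (deg V E j)"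

definition smax :: "'v set \<Rightarrow> ('v \<Rightarrow> real) \<Rightarrow> real" where
  "smax V s = Max (s ` V)"

definition alpha :: "'v set \<Rightarrow> ('v \<Rightarrow> real) \<Rightarrow> real" where
  "alpha V s = 4 * smax V s"

definition Ssum :: "'v set \<Rightarrow> ('v \<Rightarrow> real) \<Rightarrow> real" where
  "Ssum V s = (\<Sum>i\<in>V. s i)"

definition wload :: "nat \<Rightarrow> (nat \<Rightarrow> 'v) \<Rightarrow> 'v \<Rightarrow> nat" where
  "wload m x i = card {t. t < m \<and> x t = i}"

definition lload :: "('v \<Rightarrow> real) \<Rightarrow> nat \<Rightarrow> (nat \<Rightarrow> 'v) \<Rightarrow> 'v \<Rightarrow> real" where
  "lload s m x i = real (wload m x i) / s i"

definition Psi0 :: "'v set \<Rightarrow> ('v \<Rightarrow> real) \<Rightarrow> nat \<Rightarrow> (nat \<Rightarrow> 'v) \<Rightarrow> real" where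
  "Psi0 V s m x = (\<Sum>i\<in>V. (real (wload m x i) - real m * s i / Ssum V s)\<^sup>2 / s i)"

text \<open>Probability that a task on i, having chosen neighbour j, moves to j (when l_i - l_j > 1/s_j).\<close>
definition move_prob :: "'v set \<Rightarrow> ('v \<Rightarrow> 'v \<Rightarrow> bool) \<Rightarrow> ('v \<Rightarrow> real) \<Rightarrow> nat \<Rightarrow> (nat \<Rightarrow> 'v)
    \<Rightarrow> 'v \<Rightarrow> 'v \<Rightarrow> real" where
  "move_prob V E s m x i j =
     real (deg V E i) / real (dmax V E i j) *
     ((lload s m x i - lload s m x j) /
      (alpha V s * (1 / s i + 1 / s j) * real (wload m x i)))"

definition task_move :: "'v set \<Rightarrow> ('v \<Rightarrow> 'v \<Rightarrow> bool) \<Rightarrow> ('v \<Rightarrow> real) \<Rightarrow> nat \<Rightarrow> (nat \<Rightarrow> 'v)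
    \<Rightarrow> 'v \<Rightarrow> 'v pmf" where
  "task_move V E s m x i =
     (if nbrs V E i = {} then return_pmf i
      else pmf_of_set (nbrs V E i) \<bind> (\<lambda>j.
        if lload s m x i - lload s m x j > 1 / s j
        then map_pmf (\<lambda>b. if b then j else i) (bernoulli_pmf (move_prob V E s m x i j))
        else return_pmf i))"

definition round_pmf :: "'v set \<Rightarrow> ('v \<Rightarrow> 'v \<Rightarrow> bool) \<Rightarrow> ('v \<Rightarrow> real) \<Rightarrow> nat \<Rightarrow> (nat \<Rightarrow> 'v)
    \<Rightarrow> (nat \<Rightarrow> 'v) pmf" where
  "round_pmf V E s m x = Pi_pmf {..<m} undefined (\<lambda>t. task_move V E s m x (x t))"

end

theory Submission
  imports Defs
begin

text \<open>After one round, the number of tasks on processor \<open>i\<close> is a sum of independent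
  Bernoulli variables, one per task. Its mean is \<open>w\<^sub>i\<close> minus the expected net outflow
  \<open>\<Delta>\<^sub>i = \<Sum>\<^sub>j (f\<^sub>i\<^sub>j - f\<^sub>j\<^sub>i)\<close>, where \<open>f\<^sub>i\<^sub>j\<close> is the expected number of tasks moving from \<open>i\<close>
  to \<open>j\<close>, and its variance is at most the total expected flow through \<open>i\<close>. So the expected
  drop of \<open>\<Psi>\<^sub>0\<close> is at least \<open>\<Sum>\<^sub>i (2 \<ell>\<^sub>i \<Delta>\<^sub>i - (\<Delta>\<^sub>i\<^sup>2 + \<Sum>\<^sub>j (f\<^sub>i\<^sub>j + f\<^sub>j\<^sub>i)) / s\<^sub>i)\<close>; the centring
  term vanishes because the net outflows sum to zero. Cauchy-Schwarz over the neighbours gives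
  \<open>\<Delta>\<^sub>i\<^sup>2 \<le> \<Sum>\<^sub>j d\<^sub>i\<^sub>j (f\<^sub>i\<^sub>j\<^sup>2 + f\<^sub>j\<^sub>i\<^sup>2)\<close>, which splits the bound into contributions of single edges.
  For each edge, an elementary inequality in the load difference shows that its contribution
  exceeds the target term up to an error \<open>1 / (\<alpha> d\<^sub>i\<^sub>j)\<close>, and these errors sum to at most
  \<open>1 / \<alpha>\<close> at each vertex.\<close>

lemma expectation_Pi_pmf_prod_indicator:
  assumes "finite A" "B \<subseteq> A"
  shows "measure_pmf.expectation (Pi_pmf A dflt Q) (\<lambda>y. \<Prod>t\<in>B. of_bool (y t = i))
       = (\<Prod>t\<in>B. pmf (Q t) i)"
proof -
  let ?f = "\<lambda>t v. if t \<in> B then of_bool (v = i) else 1 :: real"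
  have "(\<lambda>y. \<Prod>t\<in>B. of_bool (y t = i)) = (\<lambda>y. \<Prod>t\<in>A. ?f t (y t))"
    using assms by (intro ext prod.mono_neutral_cong_left) auto
  moreover have "measure_pmf.expectation (Pi_pmf A dflt Q) (\<lambda>y. \<Prod>t\<in>A. ?f t (y t))
      = (\<Prod>t\<in>A. measure_pmf.expectation (Q t) (?f t))"
    using assms(1) by (rule expectation_prod_Pi_pmf)
      (auto intro!: measure_pmf.integrable_const_bound[where B=1])
  moreover have "measure_pmf.expectation (Q t) (\<lambda>v. of_bool (v = i)) = pmf (Q t) i" for t
  proof -
    have "(\<lambda>v. of_bool (v = i) :: real) = indicator {i}" by (auto simp: indicator_def)
    then show ?thesis by (simp add: measure_pmf_single)
  qed
  ultimately show ?thesis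
    using assms by (simp add: prod.mono_neutral_cong_right[OF assms(1,2)])
qed

lemma expectation_Pi_pmf_count_sq:
  assumes "finite A"
  shows "measure_pmf.expectation (Pi_pmf A dflt Q) (\<lambda>y. (real (card {t\<in>A. y t = i}) - b)\<^sup>2)
       = ((\<Sum>t\<in>A. pmf (Q t) i) - b)\<^sup>2 + (\<Sum>t\<in>A. pmf (Q t) i * (1 - pmf (Q t) i))"
proof -
  let ?E = "measure_pmf.expectation (Pi_pmf A dflt Q)"
  let ?X = "\<lambda>t y. of_bool (y t = i) :: real"
  let ?p = "\<lambda>t. pmf (Q t) i"
  have int: "integrable (Pi_pmf A dflt Q) (?X t)" "integrable (Pi_pmf A dflt Q) (\<lambda>y. ?X t y * ?X u y)"
    for t u by (auto intro!: measure_pmf.integrable_const_bound[where B=1])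
  have card_eq_sum: "real (card {t\<in>A. y t = i}) = (\<Sum>t\<in>A. ?X t y)" for y
    using assms by (simp add: of_bool_def sum.If_cases Int_def conj_commute)
  have pair: "?X t y * ?X u y = (\<Prod>v\<in>{t, u}. ?X v y)" for t u y
    by (cases "t = u") auto
  have E_pair: "?E (\<lambda>y. ?X t y * ?X u y) = ?p t * ?p u + (if t = u then ?p t - ?p t * ?p t else 0)"
    if "t \<in> A" "u \<in> A" for t u
    unfolding pair using that
    by (subst expectation_Pi_pmf_prod_indicator[OF assms]) auto
  have E_single: "?E (?X t) = ?p t" if "t \<in> A" for t
    using expectation_Pi_pmf_prod_indicator[OF assms, of "{t}"] that by simp
  have "?E (\<lambda>y. (real (card {t\<in>A. y t = i}) - b)\<^sup>2)
      = ?E (\<lambda>y. (\<Sum>t\<in>A. \<Sum>u\<in>A. ?X t y * ?X u y) - 2 * b * (\<Sum>t\<in>A. ?X t y) + b\<^sup>2)"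
    unfolding card_eq_sum by (simp add: power2_eq_square algebra_simps sum_product)
  also have "\<dots> = (\<Sum>t\<in>A. \<Sum>u\<in>A. ?E (\<lambda>y. ?X t y * ?X u y)) - 2 * b * (\<Sum>t\<in>A. ?E (?X t)) + b\<^sup>2"
    by (simp add: int Bochner_Integration.integral_sum)
  also have "\<dots> = (\<Sum>t\<in>A. \<Sum>u\<in>A. ?p t * ?p u + (if t = u then ?p t - ?p t * ?p t else 0))
      - 2 * b * (\<Sum>t\<in>A. ?p t) + b\<^sup>2"
    by (simp add: E_pair E_single)
  also have "\<dots> = ((\<Sum>t\<in>A. ?p t) - b)\<^sup>2 + (\<Sum>t\<in>A. ?p t * (1 - ?p t))"
    using assms by (simp add: sum.distrib sum_product power2_eq_square algebra_simps sum_subtractf)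
  finally show ?thesis .
qed

lemma square_deviation_drop_div:
  fixes w b D F s :: real
  shows "((w - b)\<^sup>2 - ((w - D - b)\<^sup>2 + F)) / s = 2 * (w / s) * D - (D\<^sup>2 + F) / s - 2 * (b / s) * D"
  by (cases "s = 0") (simp_all add: field_simps power2_eq_square)

lemma sum_tasks_eq_sum_wload:
  assumes "finite V" and "\<And>t. t < m \<Longrightarrow> x t \<in> V"
  shows "(\<Sum>t<m. g (x t)) = (\<Sum>k\<in>V. real (wload m x k) * (g k :: real))"
proof -
  have "(\<Sum>t<m. g (x t)) = (\<Sum>k\<in>V. \<Sum>t\<in>{t\<in>{..<m}. x t = k}. g (x t))"
    using assms by (intro sum.group[symmetric]) auto
  also have "\<dots> = (\<Sum>k\<in>V. real (wload m x k) * g k)"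
  proof (intro sum.cong refl)
    fix k
    have "{t\<in>{..<m}. x t = k} = {t. t < m \<and> x t = k}" by auto
    then show "(\<Sum>t\<in>{t\<in>{..<m}. x t = k}. g (x t)) = real (wload m x k) * g k"
      by (simp add: wload_def)
  qed
  finally show ?thesis .
qed

lemma sum_pairs_eq_double_sum:
  assumes "finite V"
  shows "(\<Sum>(i, j) \<in> {(i, j). i \<in> V \<and> j \<in> V \<and> E i j}. f i j)
       = (\<Sum>i\<in>V. \<Sum>j\<in>V. if E i j then f i j else (0::real))"
proof -
  have "{(i, j). i \<in> V \<and> j \<in> V \<and> E i j} = {p \<in> V \<times> V. E (fst p) (snd p)}" by auto
  then have "(\<Sum>(i, j) \<in> {(i, j). i \<in> V \<and> j \<in> V \<and> E i j}. f i j)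
      = (\<Sum>p \<in> V \<times> V. if E (fst p) (snd p) then f (fst p) (snd p) else 0)"
    using assms by (simp add: sum.inter_filter[symmetric] case_prod_beta)
  then show ?thesis
    by (simp add: sum.cartesian_product case_prod_beta)
qed

lemma flow_gain_ge:
  fixes si sj al Dd a :: real
  assumes si: "1 \<le> si" and sj: "1 \<le> sj" and al: "4 \<le> al" and D: "1 \<le> Dd"
  defines "c \<equiv> 1 / si + 1 / sj"
  defines "F \<equiv> a / (al * Dd * c)"
  shows "(1 - 2 / al) * a\<^sup>2 / (al * Dd * c) - 1 / (al * Dd) \<le> 2 * a * F - Dd * F\<^sup>2 * c - F * c"
proof -
  have "0 < 1 / si" "1 / si \<le> 1" "0 < 1 / sj" "1 / sj \<le> 1" using si sj by auto
  then have c0: "0 < c" and c2: "c \<le> 2" unfolding c_def by linarith+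
  define K where "K = al * Dd"
  have K: "0 < K" using al D by (simp add: K_def)
  define u where "u = a / c"
  have a: "a = u * c" using c0 by (simp add: u_def)
  have "- 1 / K \<le> (c / K) * (- 1 / 4)" using c2 K by (simp add: field_simps)
  also have "\<dots> \<le> (c / K) * (u\<^sup>2 - u)"
    using c0 K sum_squares_ge_zero[of "u - 1/2" 0]
    by (intro mult_left_mono) (auto simp: power2_eq_square algebra_simps)
  also have "\<dots> \<le> (c / K) * (u\<^sup>2 * (1 + 1 / al) - u)"
    using c0 K al by (intro mult_left_mono) (auto simp: algebra_simps)
  also have "\<dots> = 2 * a * F - Dd * F\<^sup>2 * c - F * c - (1 - 2 / al) * a\<^sup>2 / (al * Dd * c)"
    unfolding F_def a K_def using c0 al D by (simp add: field_simps power2_eq_square)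
  finally show ?thesis by (simp add: K_def)
qed

lemma small_difference_gain_target_le:
  fixes si sj al Dd a :: real
  assumes si: "1 \<le> si" and sj: "1 \<le> sj" and al: "4 \<le> al" and D: "1 \<le> Dd"
    and "a \<le> 1 / sj" and "- a \<le> 1 / si"
  shows "(1 - 2 / al) * a\<^sup>2 / (al * Dd * (1 / si + 1 / sj)) \<le> 1 / (al * Dd)"
proof -
  define c where "c = 1 / si + 1 / sj"
  have c0: "0 < c" unfolding c_def using si sj by (simp add: add_pos_pos)
  have "a\<^sup>2 \<le> c"
  proof (cases "0 \<le> a")
    case True
    then have "a\<^sup>2 \<le> (1 / sj)\<^sup>2" using assms by (intro power_mono) auto
    also have "\<dots> \<le> 1 / sj" using sj by (simp add: power2_eq_square divide_le_eq)
    finally show ?thesis using si unfolding c_def by (smt (verit) divide_nonneg_nonneg)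
  next
    case False
    then have "a\<^sup>2 \<le> (1 / si)\<^sup>2" using assms power_mono[of "- a" "1 / si" 2] by auto
    also have "\<dots> \<le> 1 / si" using si by (simp add: power2_eq_square divide_le_eq)
    finally show ?thesis using sj unfolding c_def by (smt (verit) divide_nonneg_nonneg)
  qed
  moreover have "(1 - 2 / al) * a\<^sup>2 \<le> a\<^sup>2"
    using al by (simp add: mult_left_le_one_le)
  ultimately have "(1 - 2 / al) * a\<^sup>2 / (al * Dd * c) \<le> c / (al * Dd * c)"
    using al D c0 by (intro divide_right_mono) auto
  also have "\<dots> = 1 / (al * Dd)" using c0 by simp
  finally show ?thesis by (simp add: c_def)
qed

lemma edge_gain_bound:
  fixes si sj al Dd li lj :: real
  assumes si: "1 \<le> si" and sj: "1 \<le> sj" and al: "4 \<le> al" and D: "1 \<le> Dd"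
  defines "Fij \<equiv> (if li - lj > 1 / sj then (li - lj) / (al * Dd * (1 / si + 1 / sj)) else 0)"
  defines "Fji \<equiv> (if lj - li > 1 / si then (lj - li) / (al * Dd * (1 / sj + 1 / si)) else 0)"
  shows "(1 - 2 / al) * (li - lj)\<^sup>2 / (al * Dd * (1 / si + 1 / sj)) - 1 / (al * Dd)
     \<le> (2 * (li - lj) * Fij - Dd * Fij\<^sup>2 * (1 / si + 1 / sj) - Fij * (1 / si + 1 / sj))
       + (2 * (lj - li) * Fji - Dd * Fji\<^sup>2 * (1 / sj + 1 / si) - Fji * (1 / sj + 1 / si))"
proof -
  have "0 < 1 / si" "0 < 1 / sj" using si sj by auto
  then consider (forward) "li - lj > 1 / sj" "Fji = 0"
    | (backward) "lj - li > 1 / si" "Fij = 0"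
    | (idle) "Fij = 0" "Fji = 0" "li - lj \<le> 1 / sj" "lj - li \<le> 1 / si"
    by (cases "li - lj > 1 / sj"; cases "lj - li > 1 / si") (auto simp: Fij_def Fji_def)
  then show ?thesis
  proof cases
    case forward
    then show ?thesis using flow_gain_ge[OF si sj al D, of "li - lj"] by (simp add: Fij_def)
  next
    case backward
    have "(li - lj)\<^sup>2 = (lj - li)\<^sup>2" by (simp add: power2_commute)
    then show ?thesis
      using backward flow_gain_ge[OF sj si al D, of "lj - li"] by (simp add: Fji_def add.commute)
  next
    case idle
    then show ?thesis using small_difference_gain_target_le[OF si sj al D, of "li - lj"] by simp
  qed
qed

locale load_balancing =
  fixes V :: "'v set" and E :: "'v \<Rightarrow> 'v \<Rightarrow> bool" and s :: "'v \<Rightarrow> real"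
    and m :: nat and x :: "nat \<Rightarrow> 'v"
  assumes finite_V: "finite V" and V_nonempty: "V \<noteq> {}"
    and edge_in_V: "\<And>i j. E i j \<Longrightarrow> i \<in> V \<and> j \<in> V \<and> i \<noteq> j"
    and edge_sym: "\<And>i j. E i j \<Longrightarrow> E j i"
    and speed_ge_1: "\<And>i. i \<in> V \<Longrightarrow> 1 \<le> s i"
    and task_in_V: "\<And>t. t < m \<Longrightarrow> x t \<in> V"
begin

abbreviation "l \<equiv> lload s m x"
abbreviation "w i \<equiv> real (wload m x i)"
abbreviation "d i j \<equiv> real (dmax V E i j)"
abbreviation "\<alpha> \<equiv> alpha V s"
abbreviation "dest k \<equiv> task_move V E s m x k"

definition flow :: "'v \<Rightarrow> 'v \<Rightarrow> real" where
  "flow i j = (if E i j \<and> l i - l j > 1 / s j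
     then (l i - l j) / (\<alpha> * d i j * (1 / s i + 1 / s j)) else 0)"

definition net_outflow :: "'v \<Rightarrow> real" where
  "net_outflow i = (\<Sum>j\<in>V. flow i j - flow j i)"

lemma speed_pos: "i \<in> V \<Longrightarrow> 0 < s i"
  using speed_ge_1 by fastforce

lemma alpha_ge_4: "4 \<le> \<alpha>"
proof -
  obtain i where i: "i \<in> V" using V_nonempty by blast
  then have "s i \<le> smax V s" unfolding smax_def using finite_V by auto
  then show ?thesis using speed_ge_1[OF i] by (simp add: alpha_def)
qed

lemma finite_nbrs: "finite (nbrs V E i)"
  using finite_V by (simp add: nbrs_def)

lemma deg_ge_1: "E i j \<Longrightarrow> 1 \<le> deg V E i"
  using edge_in_V finite_nbrs[of i] card_gt_0_iff[of "nbrs V E i"]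
  by (fastforce simp: deg_def nbrs_def)

lemma dmax_ge_1: "E i j \<Longrightarrow> 1 \<le> d i j"
  using deg_ge_1[of i j] by (simp add: dmax_def)

lemma flow_nonneg: "0 \<le> flow i j"
proof (cases "E i j \<and> l i - l j > 1 / s j")
  case True
  then have "1 \<le> s i" "1 \<le> s j" using edge_in_V speed_ge_1 by auto
  then have "0 < 1 / s i + 1 / s j" and "0 < l i - l j"
    using True by (auto intro: add_pos_pos) (smt (verit) divide_pos_pos)
  then show ?thesis using True dmax_ge_1[of i j] alpha_ge_4 by (simp add: flow_def)
qed (auto simp: flow_def)

lemma flow_eq_0: "\<not> E i j \<Longrightarrow> flow i j = 0" and flow_rev_eq_0: "\<not> E i j \<Longrightarrow> flow j i = 0"
  using edge_sym by (auto simp: flow_def)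

lemma flow_self: "flow i i = 0"
  using edge_in_V by (auto simp: flow_def)

lemma sum_net_outflow: "(\<Sum>i\<in>V. net_outflow i) = 0"
  unfolding net_outflow_def sum_subtractf by (subst sum.swap) simp


lemma set_pmf_task_move: "k \<in> V \<Longrightarrow> set_pmf (dest k) \<subseteq> V"
  using finite_nbrs[of k] by (auto simp: task_move_def set_pmf_of_set nbrs_def split: if_splits)

lemma move_prob_bounds:
  assumes edge: "E k j" and active: "l k - l j > 1 / s j"
  shows "0 \<le> move_prob V E s m x k j" "move_prob V E s m x k j \<le> 1" "0 < w k"
proof -
  have "k \<in> V" "j \<in> V" using edge_in_V[OF edge] by auto
  then have sk: "0 < s k" and sj: "0 < s j" using speed_pos by auto
  have lj: "0 \<le> l j" using sj by (simp add: lload_def)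
  have diff: "0 < l k - l j" using active sj by (smt (verit) divide_pos_pos)
  then have "0 < l k" using lj by linarith
  then show wk: "0 < w k" using sk by (simp add: lload_def zero_less_divide_iff)
  have deg: "0 \<le> real (deg V E k) / d k j" "real (deg V E k) / d k j \<le> 1"
    using deg_ge_1[OF edge] by (auto simp: dmax_def)
  have c: "0 < 1 / s k + 1 / s j" using sk sj by (intro add_pos_pos) auto
  have den: "0 < \<alpha> * (1 / s k + 1 / s j) * w k" using alpha_ge_4 c wk by simp
  have "l k - l j \<le> w k / s k" using lj by (simp add: lload_def)
  also have "\<dots> \<le> (1 / s k + 1 / s j) * w k" using sj wk by (simp add: field_simps)
  also have "\<dots> \<le> \<alpha> * (1 / s k + 1 / s j) * w k"
    using alpha_ge_4 c wk by (simp add: mult_le_cancel_right1)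
  finally have q: "0 \<le> (l k - l j) / (\<alpha> * (1 / s k + 1 / s j) * w k)"
      "(l k - l j) / (\<alpha> * (1 / s k + 1 / s j) * w k) \<le> 1"
    using diff den by auto
  show "0 \<le> move_prob V E s m x k j"
    unfolding move_prob_def by (rule mult_nonneg_nonneg[OF deg(1) q(1)])
  show "move_prob V E s m x k j \<le> 1"
    unfolding move_prob_def using deg q mult_le_one by blast
qed

(* For an isolated processor both sides vanish, the right one because x / 0 = 0. *)
lemma pmf_task_move:
  assumes "j \<noteq> k"
  shows "pmf (dest k) j
       = (if E k j \<and> l k - l j > 1 / s j then move_prob V E s m x k j else 0) / deg V E k"
proof (cases "nbrs V E k = {}")
  case True
  then show ?thesis using assms by (simp add: task_move_def deg_def)
next
  case False
  let ?N = "nbrs V E k"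
  let ?active = "\<lambda>j. l k - l j > 1 / s j"
  let ?g = "\<lambda>j. if ?active j
        then map_pmf (\<lambda>b. if b then j else k) (bernoulli_pmf (move_prob V E s m x k j))
        else return_pmf k"
  have other: "pmf (?g j') j = 0" if "j' \<noteq> j" for j'
  proof -
    have "j \<notin> set_pmf (?g j')" using that assms by auto
    then show ?thesis by (simp add: set_pmf_eq)
  qed
  have own: "pmf (?g j) j = (if E k j \<and> ?active j then move_prob V E s m x k j else 0)"
    if "j \<in> ?N"
  proof (cases "?active j")
    case True
    have "E k j" using that by (simp add: nbrs_def)
    have "inj (\<lambda>b. if b then j else k)" using assms by (auto simp: inj_def)
    then have "pmf (map_pmf (\<lambda>b. if b then j else k) (bernoulli_pmf (move_prob V E s m x k j)))
        ((\<lambda>b. if b then j else k) True) = pmf (bernoulli_pmf (move_prob V E s m x k j)) True"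
      by (rule pmf_map_inj')
    then show ?thesis using True \<open>E k j\<close> move_prob_bounds[OF \<open>E k j\<close> True] by simp
  qed (use assms in simp)
  have "pmf (dest k) j = (\<Sum>j'\<in>?N. pmf (?g j') j) / card ?N"
    using False finite_nbrs[of k]
    by (simp add: task_move_def pmf_bind integral_pmf_of_set)
  also have "(\<Sum>j'\<in>?N. pmf (?g j') j) = (\<Sum>j'\<in>?N. if j' = j then pmf (?g j) j else 0)"
    using other by (intro sum.cong) auto
  also have "\<dots> = (if j \<in> ?N then pmf (?g j) j else 0)"
    using finite_nbrs[of k] by simp
  also have "\<dots> = (if E k j \<and> ?active j then move_prob V E s m x k j else 0)"
    using own edge_in_V by (auto simp: nbrs_def)
  finally show ?thesis by (simp add: deg_def)
qed

lemma tasks_times_pmf_task_move: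
  assumes "j \<noteq> k"
  shows "w k * pmf (dest k) j = flow k j"
proof (cases "E k j \<and> l k - l j > 1 / s j")
  case True
  note bounds = move_prob_bounds[OF conjunct1[OF True] conjunct2[OF True]]
  have cancel: "w' * (D / D' * (a / (al * c * w')) / D) = a / (al * D' * c)"
    if "0 < w'" "0 < D" "0 < D'" "0 < al" for w' D D' c al a :: real
    using that by (simp add: field_simps)
  have "pmf (dest k) j = move_prob V E s m x k j / deg V E k"
    using True assms by (simp add: pmf_task_move)
  then show ?thesis
    unfolding flow_def move_prob_def if_P[OF True]
  proof (rule ssubst, intro cancel[OF bounds(3)])
    show "0 < real (deg V E k)" "0 < d k j"
      using True deg_ge_1[of k j] dmax_ge_1[of k j] by auto
  qed (use alpha_ge_4 in auto)
next
  case False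
  then show ?thesis unfolding pmf_task_move[OF assms] flow_def if_not_P[OF False] by simp
qed

lemma expected_tasks_leaving:
  assumes "i \<in> V"
  shows "w i * (1 - pmf (dest i) i) = (\<Sum>j\<in>V. flow i j)"
proof -
  have "(\<Sum>j\<in>V. pmf (dest i) j) = 1"
    by (rule sum_pmf_eq_1[OF finite_V set_pmf_task_move[OF assms]])
  then have "1 - pmf (dest i) i = (\<Sum>j\<in>V - {i}. pmf (dest i) j)"
    using finite_V assms by (simp add: sum.remove)
  then have "w i * (1 - pmf (dest i) i) = (\<Sum>j\<in>V - {i}. flow i j)"
    by (simp add: sum_distrib_left tasks_times_pmf_task_move)
  also have "\<dots> = (\<Sum>j\<in>V. flow i j)"
    using finite_V assms by (simp add: sum.remove flow_self)
  finally show ?thesis .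
qed

lemma expected_tasks_arriving:
  assumes "i \<in> V"
  shows "(\<Sum>k\<in>V - {i}. w k * pmf (dest k) i) = (\<Sum>k\<in>V. flow k i)"
proof -
  have "(\<Sum>k\<in>V - {i}. w k * pmf (dest k) i) = (\<Sum>k\<in>V - {i}. flow k i)"
    by (intro sum.cong) (auto simp: tasks_times_pmf_task_move)
  also have "\<dots> = (\<Sum>k\<in>V. flow k i)"
    using finite_V assms by (simp add: sum.remove flow_self)
  finally show ?thesis .
qed

lemma expected_tasks_after_round:
  assumes "i \<in> V"
  shows "(\<Sum>t<m. pmf (dest (x t)) i) = w i - net_outflow i"
proof -
  have "(\<Sum>t<m. pmf (dest (x t)) i) = (\<Sum>k\<in>V. w k * pmf (dest k) i)"
    by (rule sum_tasks_eq_sum_wload[OF finite_V task_in_V])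
  also have "\<dots> = w i * pmf (dest i) i + (\<Sum>k\<in>V - {i}. w k * pmf (dest k) i)"
    using finite_V assms by (simp add: sum.remove)
  also have "\<dots> = w i - (\<Sum>j\<in>V. flow i j) + (\<Sum>k\<in>V. flow k i)"
    using expected_tasks_leaving[OF assms] expected_tasks_arriving[OF assms] by (simp add: algebra_simps)
  finally show ?thesis by (simp add: net_outflow_def sum_subtractf)
qed

lemma variance_tasks_after_round_le:
  assumes "i \<in> V"
  shows "(\<Sum>t<m. pmf (dest (x t)) i * (1 - pmf (dest (x t)) i)) \<le> (\<Sum>j\<in>V. flow i j + flow j i)"
proof -
  have "(\<Sum>t<m. pmf (dest (x t)) i * (1 - pmf (dest (x t)) i))
      = (\<Sum>k\<in>V. w k * (pmf (dest k) i * (1 - pmf (dest k) i)))"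
    by (rule sum_tasks_eq_sum_wload[OF finite_V task_in_V])
  also have "\<dots> = w i * (pmf (dest i) i * (1 - pmf (dest i) i))
      + (\<Sum>k\<in>V - {i}. w k * (pmf (dest k) i * (1 - pmf (dest k) i)))"
    using finite_V assms by (simp add: sum.remove)
  also have "\<dots> \<le> w i * (1 - pmf (dest i) i) + (\<Sum>k\<in>V - {i}. w k * pmf (dest k) i)"
  proof (intro add_mono sum_mono mult_left_mono)
    fix k
    show "pmf (dest k) i * (1 - pmf (dest k) i) \<le> pmf (dest k) i"
      by (simp add: mult_left_le pmf_le_1)
  qed (auto simp: mult_left_le_one_le pmf_le_1)
  finally show ?thesis
    using expected_tasks_leaving[OF assms] expected_tasks_arriving[OF assms] by (simp add: sum.distrib)
qed

lemma finite_set_pmf_round: "finite (set_pmf (round_pmf V E s m x))"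
proof -
  have "finite (set_pmf (dest (x t)))" if "t < m" for t
    using finite_subset[OF set_pmf_task_move[OF task_in_V[OF that]] finite_V] .
  then show ?thesis by (auto simp: round_pmf_def set_Pi_pmf intro!: finite_PiE_dflt)
qed

lemma expected_sq_deviation_after_round_le:
  assumes "i \<in> V"
  shows "measure_pmf.expectation (round_pmf V E s m x) (\<lambda>y. (real (card {t\<in>{..<m}. y t = i}) - b)\<^sup>2)
     \<le> (w i - net_outflow i - b)\<^sup>2 + (\<Sum>j\<in>V. flow i j + flow j i)"
  unfolding round_pmf_def expectation_Pi_pmf_count_sq[OF finite_lessThan]
  using expected_tasks_after_round[OF assms] variance_tasks_after_round_le[OF assms] by simp

lemma expected_Psi0_drop_ge:
  "(\<Sum>i\<in>V. 2 * l i * net_outflow i - ((net_outflow i)\<^sup>2 + (\<Sum>j\<in>V. flow i j + flow j i)) / s i)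
     \<le> measure_pmf.expectation (round_pmf V E s m x) (\<lambda>y. Psi0 V s m x - Psi0 V s m y)"
proof -
  define b where "b i = real m * s i / Ssum V s" for i
  define N where "N y i = real (card {t\<in>{..<m}. y t = i})" for y :: "nat \<Rightarrow> 'v" and i
  let ?R = "round_pmf V E s m x"
  let ?F = "\<lambda>i. \<Sum>j\<in>V. flow i j + flow j i"
  have Psi0_eq: "Psi0 V s m y = (\<Sum>i\<in>V. (N y i - b i)\<^sup>2 / s i)" for y
  proof -
    have "{t. t < m \<and> y t = i} = {t\<in>{..<m}. y t = i}" for i by auto
    then show ?thesis by (simp add: Psi0_def wload_def N_def b_def)
  qed
  have w_eq: "w i = N x i" for i
    unfolding N_def wload_def by (metis lessThan_iff mem_Collect_eq Collect_cong)
  have expected_sq: "measure_pmf.expectation ?R (\<lambda>y. (N y i - b i)\<^sup>2)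
      \<le> (w i - net_outflow i - b i)\<^sup>2 + ?F i" if "i \<in> V" for i
    unfolding N_def using expected_sq_deviation_after_round_le[OF that] .
  have "measure_pmf.expectation ?R (\<lambda>y. Psi0 V s m x - Psi0 V s m y)
      = (\<Sum>i\<in>V. ((w i - b i)\<^sup>2 - measure_pmf.expectation ?R (\<lambda>y. (N y i - b i)\<^sup>2)) / s i)"
    using finite_set_pmf_round
    by (simp add: Psi0_eq w_eq integrable_measure_pmf_finite Bochner_Integration.integral_sum
        sum_subtractf diff_divide_distrib)
  also have "\<dots> \<ge> (\<Sum>i\<in>V. ((w i - b i)\<^sup>2 - ((w i - net_outflow i - b i)\<^sup>2 + ?F i)) / s i)"
  proof (intro sum_mono divide_right_mono)
    fix i assume "i \<in> V"
    then show "0 \<le> s i" using speed_pos[of i] by simp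
    show "(w i - b i)\<^sup>2 - ((w i - net_outflow i - b i)\<^sup>2 + ?F i)
        \<le> (w i - b i)\<^sup>2 - measure_pmf.expectation ?R (\<lambda>y. (N y i - b i)\<^sup>2)"
      using expected_sq[OF \<open>i \<in> V\<close>] by linarith
  qed
  also have "(\<Sum>i\<in>V. ((w i - b i)\<^sup>2 - ((w i - net_outflow i - b i)\<^sup>2 + ?F i)) / s i)
      = (\<Sum>i\<in>V. 2 * l i * net_outflow i - ((net_outflow i)\<^sup>2 + ?F i) / s i)
        - (\<Sum>i\<in>V. 2 * (real m / Ssum V s) * net_outflow i)"
    unfolding sum_subtractf[symmetric]
  proof (intro sum.cong refl)
    fix i assume "i \<in> V"
    then have "s i \<noteq> 0" using speed_pos[of i] by simp
    then have ratios: "b i / s i = real m / Ssum V s" "w i / s i = l i"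
      by (simp_all add: b_def lload_def)
    show "((w i - b i)\<^sup>2 - ((w i - net_outflow i - b i)\<^sup>2 + ?F i)) / s i
        = 2 * l i * net_outflow i - ((net_outflow i)\<^sup>2 + ?F i) / s i
          - 2 * (real m / Ssum V s) * net_outflow i"
      by (simp only: square_deviation_drop_div ratios)
  qed
  also have "(\<Sum>i\<in>V. 2 * (real m / Ssum V s) * net_outflow i) = 0"
    unfolding sum_distrib_left[symmetric] sum_net_outflow by simp
  finally show ?thesis by simp
qed

(* Vertex i's share of edge {i, j} in the bound of expected_Psi0_drop_ge once the squared
   net outflow is estimated by net_outflow_sq_le. *)
definition edge_gain :: "'v \<Rightarrow> 'v \<Rightarrow> real" where
  "edge_gain i j = 2 * l i * (flow i j - flow j i)
     - (d i j * ((flow i j)\<^sup>2 + (flow j i)\<^sup>2) + flow i j + flow j i) / s i"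

lemma net_outflow_sq_le:
  assumes "i \<in> V"
  shows "(net_outflow i)\<^sup>2 \<le> (\<Sum>j\<in>V. d i j * ((flow i j)\<^sup>2 + (flow j i)\<^sup>2))"
proof -
  let ?N = "nbrs V E i"
  have "net_outflow i = (\<Sum>j\<in>?N. flow i j - flow j i)"
    unfolding net_outflow_def
    by (intro sum.mono_neutral_right finite_V) (auto simp: nbrs_def flow_eq_0 flow_rev_eq_0)
  then have "(net_outflow i)\<^sup>2 \<le> (\<Sum>j\<in>?N. (flow i j - flow j i)\<^sup>2) * card ?N"
    by (simp add: sum_squared_le_sum_of_squares)
  also have "\<dots> = (\<Sum>j\<in>?N. real (deg V E i) * (flow i j - flow j i)\<^sup>2)"
    by (simp add: deg_def sum_distrib_left mult.commute)
  also have "\<dots> \<le> (\<Sum>j\<in>?N. d i j * ((flow i j)\<^sup>2 + (flow j i)\<^sup>2))"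
  proof (intro sum_mono mult_mono)
    fix j
    show "(flow i j - flow j i)\<^sup>2 \<le> (flow i j)\<^sup>2 + (flow j i)\<^sup>2"
      using flow_nonneg[of i j] flow_nonneg[of j i] by (simp add: power2_eq_square algebra_simps)
  qed (auto simp: dmax_def)
  also have "\<dots> = (\<Sum>j\<in>V. d i j * ((flow i j)\<^sup>2 + (flow j i)\<^sup>2))"
    by (intro sum.mono_neutral_left finite_V) (auto simp: nbrs_def flow_eq_0 flow_rev_eq_0)
  finally show ?thesis .
qed

lemma vertex_gain_ge:
  assumes "i \<in> V"
  shows "(\<Sum>j\<in>V. edge_gain i j)
     \<le> 2 * l i * net_outflow i - ((net_outflow i)\<^sup>2 + (\<Sum>j\<in>V. flow i j + flow j i)) / s i"
proof -
  have "(\<Sum>j\<in>V. edge_gain i j) = 2 * l i * net_outflow i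
      - ((\<Sum>j\<in>V. d i j * ((flow i j)\<^sup>2 + (flow j i)\<^sup>2)) + (\<Sum>j\<in>V. flow i j + flow j i)) / s i"
    by (simp add: edge_gain_def net_outflow_def sum_subtractf sum.distrib sum_distrib_left
        add_divide_distrib sum_divide_distrib algebra_simps)
  then show ?thesis
    using net_outflow_sq_le[OF assms] speed_pos[OF assms] by (simp add: divide_right_mono)
qed

lemma edge_gain_pair_ge:
  assumes "E i j"
  shows "(1 - 2 / \<alpha>) * (l i - l j)\<^sup>2 / (\<alpha> * d i j * (1 / s i + 1 / s j)) - 1 / (\<alpha> * d i j)
     \<le> edge_gain i j + edge_gain j i"
proof -
  have s: "1 \<le> s i" "1 \<le> s j" using assms edge_in_V speed_ge_1 by auto
  have d_sym: "d j i = d i j" by (simp add: dmax_def max.commute)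
  have Fij: "flow i j = (if l i - l j > 1 / s j
      then (l i - l j) / (\<alpha> * d i j * (1 / s i + 1 / s j)) else 0)"
    using assms by (simp add: flow_def)
  have Fji: "flow j i = (if l j - l i > 1 / s i
      then (l j - l i) / (\<alpha> * d i j * (1 / s j + 1 / s i)) else 0)"
    using edge_sym[OF assms] by (simp add: flow_def d_sym)
  have "edge_gain i j + edge_gain j i
      = (2 * (l i - l j) * flow i j - d i j * (flow i j)\<^sup>2 * (1 / s i + 1 / s j)
          - flow i j * (1 / s i + 1 / s j))
        + (2 * (l j - l i) * flow j i - d i j * (flow j i)\<^sup>2 * (1 / s j + 1 / s i)
          - flow j i * (1 / s j + 1 / s i))"
    by (simp add: edge_gain_def d_sym algebra_simps add_divide_distrib diff_divide_distrib)
  then show ?thesis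
    using edge_gain_bound[OF s alpha_ge_4 dmax_ge_1[OF assms], of "l i" "l j"]
    unfolding Fij Fji by linarith
qed

lemma edge_gain_eq_0: "\<not> E i j \<Longrightarrow> edge_gain i j = 0"
  and edge_gain_rev_eq_0: "\<not> E i j \<Longrightarrow> edge_gain j i = 0"
  using edge_sym by (auto simp: edge_gain_def flow_eq_0 flow_rev_eq_0)

lemma sum_inverse_dmax_le:
  assumes "i \<in> V"
  shows "(\<Sum>j\<in>V. if E i j then 1 / (\<alpha> * d i j) else 0) \<le> 1 / \<alpha>"
proof -
  have "(\<Sum>j\<in>V. if E i j then 1 / (\<alpha> * d i j) else 0)
      \<le> (\<Sum>j\<in>V. if E i j then 1 / (\<alpha> * deg V E i) else 0)"
  proof (intro sum_mono)
    fix j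
    have "E i j \<Longrightarrow> \<alpha> * deg V E i \<le> \<alpha> * d i j" using alpha_ge_4 by (simp add: dmax_def)
    then show "(if E i j then 1 / (\<alpha> * d i j) else 0) \<le> (if E i j then 1 / (\<alpha> * deg V E i) else 0)"
      using alpha_ge_4 deg_ge_1[of i j] by (auto intro!: divide_left_mono)
  qed
  also have "\<dots> = deg V E i * (1 / (\<alpha> * deg V E i))"
    using finite_V by (simp add: sum.If_cases deg_def nbrs_def Int_def conj_commute)
  also have "\<dots> \<le> 1 / \<alpha>"
    using alpha_ge_4 by (cases "deg V E i = 0") auto
  finally show ?thesis .
qed

lemma sum_edge_gain_ge:
  "(1 / 2) * (\<Sum>i\<in>V. \<Sum>j\<in>V. if E i j
       then (1 - 2 / \<alpha>) * (l i - l j)\<^sup>2 / (\<alpha> * d i j * (1 / s i + 1 / s j)) else 0)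
     - card V / \<alpha> \<le> (\<Sum>i\<in>V. \<Sum>j\<in>V. edge_gain i j)"
proof -
  let ?q = "\<lambda>i j. if E i j then (1 - 2 / \<alpha>) * (l i - l j)\<^sup>2 / (\<alpha> * d i j * (1 / s i + 1 / s j)) else 0"
  let ?r = "\<lambda>i j. if E i j then 1 / (\<alpha> * d i j) else 0"
  have "(\<Sum>i\<in>V. \<Sum>j\<in>V. ?q i j) - (\<Sum>i\<in>V. \<Sum>j\<in>V. ?r i j)
      \<le> (\<Sum>i\<in>V. \<Sum>j\<in>V. edge_gain i j + edge_gain j i)"
    unfolding sum_subtractf[symmetric]
    by (intro sum_mono) (auto simp: edge_gain_pair_ge edge_gain_eq_0 edge_gain_rev_eq_0)
  also have "\<dots> = 2 * (\<Sum>i\<in>V. \<Sum>j\<in>V. edge_gain i j)"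
    by (simp add: sum.distrib sum.swap[of "\<lambda>i j. edge_gain j i"])
  finally have "(1 / 2) * (\<Sum>i\<in>V. \<Sum>j\<in>V. ?q i j) - (1 / 2) * (\<Sum>i\<in>V. \<Sum>j\<in>V. ?r i j)
      \<le> (\<Sum>i\<in>V. \<Sum>j\<in>V. edge_gain i j)"
    by simp
  moreover have "(\<Sum>i\<in>V. \<Sum>j\<in>V. ?r i j) \<le> card V / \<alpha>"
    using sum_mono[of V "\<lambda>i. \<Sum>j\<in>V. ?r i j" "\<lambda>_. 1 / \<alpha>"] sum_inverse_dmax_le by simp
  moreover have "0 \<le> card V / \<alpha>" using alpha_ge_4 by simp
  ultimately show ?thesis by linarith
qed

end

theorem lemma12:
  fixes V :: "'v set" and E :: "'v \<Rightarrow> 'v \<Rightarrow> bool" and s :: "'v \<Rightarrow> real"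
    and m :: nat and x :: "nat \<Rightarrow> 'v"
  assumes "finite V" and "V \<noteq> {}"
    and "\<And>i j. E i j \<Longrightarrow> i \<in> V \<and> j \<in> V \<and> i \<noteq> j"
    and "\<And>i j. E i j \<Longrightarrow> E j i"
    and "\<And>i. i \<in> V \<Longrightarrow> s i > 0"
    and "Min (s ` V) = 1"
    and "\<And>t. t < m \<Longrightarrow> x t \<in> V"
  shows "measure_pmf.expectation (round_pmf V E s m x) (\<lambda>y. Psi0 V s m x - Psi0 V s m y)
         \<ge> (1 / 2) * (\<Sum>(i, j) \<in> {(i, j). i \<in> V \<and> j \<in> V \<and> E i j}.
                (1 - 2 / alpha V s) * (lload s m x i - lload s m x j)\<^sup>2 /
                (alpha V s * real (dmax V E i j) * (1 / s i + 1 / s j)))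
           - real (card V) / alpha V s"
proof -
  have "1 \<le> s i" if "i \<in> V" for i
    using assms(1,6) that by (metis Min_le finite_imageI image_eqI)
  then interpret load_balancing V E s m x
    using assms by unfold_locales auto
  have "(1 / 2) * (\<Sum>i\<in>V. \<Sum>j\<in>V. if E i j
          then (1 - 2 / \<alpha>) * (l i - l j)\<^sup>2 / (\<alpha> * d i j * (1 / s i + 1 / s j)) else 0)
        - card V / \<alpha> \<le> (\<Sum>i\<in>V. \<Sum>j\<in>V. edge_gain i j)"
    by (rule sum_edge_gain_ge)
  also have "\<dots> \<le> (\<Sum>i\<in>V. 2 * l i * net_outflow i
      - ((net_outflow i)\<^sup>2 + (\<Sum>j\<in>V. flow i j + flow j i)) / s i)"
    by (intro sum_mono vertex_gain_ge)
  also have "\<dots> \<le> measure_pmf.expectation (round_pmf V E s m x) (\<lambda>y. Psi0 V s m x - Psi0 V s m y)"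
    by (rule expected_Psi0_drop_ge)
  finally show ?thesis
    unfolding sum_pairs_eq_double_sum[OF finite_V] .
qed

end
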